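(* Let $v$ be a flow on a compact surface. If $\mathrm{Cl}(v)=\Omega(v)$, then $\mathrm{Cl}(v)$ is closed and there are no non-closed recurrent points, no non-periodic limit circuits, and no circuits with wandering holonomy.
   Context: Surface: 2-dimensional paracompact manifold, possibly with boundary, possibly non-orientable. $\mathrm{Cl}(v)$ is the union of singular points and periodic orbits; $\Omega(v)$ the set of non-wandering points; $x$ is recurrent if $x\in\omega(x)\cup\alpha(x)$. A separatrix is a non-singular orbit whose $\alpha$- or $\omega$-limit set is a singular point. A non-trivial circuit is the image of an oriented circle under a continuous orientation-preserving map which is either a periodic orbit, or a directed graph (not a singleton) that is a union of separatrices and finitely many singular points; it is periodic if it is a periodic orbit. A collar of $\gamma$ is an open annulus with $\gamma$ as a boundary component which is a component of $U-\gamma$ for some neighborhood $U$ of $\gamma$. $\gamma$ is semi-attracting (resp. semi-repelling) w.r.t. a small collar $\mathbb{A}$ if $\omega(x)=\gamma$, $O^+(x)\subset\mathbb{A}$ (resp. $\alpha(x)=\gamma$, $O^-(x)\subset\mathbb{A}$) for all $x\in\mathbb{A}$. A limit circuit is a non-trivial circuit that is semi-attracting or semi-repelling. A circuit with wandering holonomy is a non-trivial circuit $\gamma$ for which there are a non-singular $x\in\gamma$ and arbitrarily small open transverse arcs $I\ni x$ such that the first return map on $I$ is orientation-reversing, has nonempty domain, and its domain and image are disjoint. *)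

theory Defs
  imports "HOL-Analysis.Analysis"
begin

text \<open>The surface is the whole carrier type 'a (a Hausdorff space, class t2_space).\<close>

definition half_plane :: "(real \<times> real) set" where
  "half_plane = {z. snd z \<ge> 0}"

definition is_surface :: "'a::t2_space set \<Rightarrow> bool" where
  "is_surface S \<longleftrightarrow> (\<forall>x\<in>S. \<exists>U V. openin (top_of_set S) U \<and> x \<in> U \<and>
      V \<subseteq> half_plane \<and> openin (top_of_set half_plane) V \<and> U homeomorphic V)"

definition is_flow :: "(real \<Rightarrow> 'a::topological_space \<Rightarrow> 'a) \<Rightarrow> bool" where
  "is_flow v \<longleftrightarrow> continuous_on UNIV (\<lambda>p::real \<times> 'a. v (fst p) (snd p)) \<and>
      (\<forall>x. v 0 x = x) \<and> (\<forall>s t x. v (s + t) x = v s (v t x))"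

definition orbit :: "(real \<Rightarrow> 'a \<Rightarrow> 'a) \<Rightarrow> 'a \<Rightarrow> 'a set" where
  "orbit v x = range (\<lambda>t. v t x)"

definition pos_orbit :: "(real \<Rightarrow> 'a \<Rightarrow> 'a) \<Rightarrow> 'a \<Rightarrow> 'a set" where
  "pos_orbit v x = (\<lambda>t. v t x) ` {0..}"

definition neg_orbit :: "(real \<Rightarrow> 'a \<Rightarrow> 'a) \<Rightarrow> 'a \<Rightarrow> 'a set" where
  "neg_orbit v x = (\<lambda>t. v t x) ` {..0}"

definition omega_limit :: "(real \<Rightarrow> 'a::topological_space \<Rightarrow> 'a) \<Rightarrow> 'a \<Rightarrow> 'a set" where
  "omega_limit v x = (\<Inter>T. closure ((\<lambda>t. v t x) ` {T..}))"

definition alpha_limit :: "(real \<Rightarrow> 'a::topological_space \<Rightarrow> 'a) \<Rightarrow> 'a \<Rightarrow> 'a set" where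
  "alpha_limit v x = (\<Inter>T. closure ((\<lambda>t. v t x) ` {..T}))"

definition singular :: "(real \<Rightarrow> 'a \<Rightarrow> 'a) \<Rightarrow> 'a \<Rightarrow> bool" where
  "singular v x \<longleftrightarrow> (\<forall>t. v t x = x)"

definition Cl :: "(real \<Rightarrow> 'a \<Rightarrow> 'a) \<Rightarrow> 'a set" where
  "Cl v = {x. singular v x \<or> (\<exists>T>0. v T x = x)}"

definition periodic_orbit :: "(real \<Rightarrow> 'a \<Rightarrow> 'a) \<Rightarrow> 'a set \<Rightarrow> bool" where
  "periodic_orbit v \<gamma> \<longleftrightarrow> (\<exists>x. \<not> singular v x \<and> (\<exists>T>0. v T x = x) \<and> \<gamma> = orbit v x)"

definition Omega :: "(real \<Rightarrow> 'a::topological_space \<Rightarrow> 'a) \<Rightarrow> 'a set" where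
  "Omega v = {x. \<forall>U. open U \<and> x \<in> U \<longrightarrow> (\<forall>T. \<exists>t>T. v t ` U \<inter> U \<noteq> {})}"

definition recurrent :: "(real \<Rightarrow> 'a::topological_space \<Rightarrow> 'a) \<Rightarrow> 'a \<Rightarrow> bool" where
  "recurrent v x \<longleftrightarrow> x \<in> omega_limit v x \<union> alpha_limit v x"

definition separatrix :: "(real \<Rightarrow> 'a::topological_space \<Rightarrow> 'a) \<Rightarrow> 'a \<Rightarrow> bool" where
  "separatrix v x \<longleftrightarrow> \<not> singular v x \<and>
     (\<exists>p. singular v p \<and> (omega_limit v x = {p} \<or> alpha_limit v x = {p}))"

text \<open>A continuous orientation-preserving map from the circle R/Z: near any parameter
  mapped to a non-singular point, it moves forward along the orbit.\<close>
definition oriented_loop :: "(real \<Rightarrow> 'a::topological_space \<Rightarrow> 'a) \<Rightarrow> (real \<Rightarrow> 'a) \<Rightarrow> bool" where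
  "oriented_loop v f \<longleftrightarrow> continuous_on UNIV f \<and> (\<forall>s. f (s + 1) = f s) \<and>
     (\<forall>s. \<not> singular v (f s) \<longrightarrow> (\<exists>\<delta>>0. \<exists>\<tau>. \<tau> s = 0 \<and> strict_mono_on {s-\<delta><..<s+\<delta>} \<tau> \<and>
         (\<forall>r\<in>{s-\<delta><..<s+\<delta>}. f r = v (\<tau> r) (f s))))"

definition nontrivial_circuit :: "(real \<Rightarrow> 'a::topological_space \<Rightarrow> 'a) \<Rightarrow> 'a set \<Rightarrow> bool" where
  "nontrivial_circuit v \<gamma> \<longleftrightarrow> periodic_orbit v \<gamma> \<or>
     ((\<exists>f. oriented_loop v f \<and> \<gamma> = f ` {0..1}) \<and> \<not> (\<exists>p. \<gamma> = {p}) \<and>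
      (\<exists>F E. finite F \<and> (\<forall>p\<in>F. singular v p) \<and> (\<forall>x\<in>E. separatrix v x) \<and>
         \<gamma> = F \<union> (\<Union>x\<in>E. orbit v x)))"

definition open_annulus :: "complex set" where
  "open_annulus = {z. 1 < cmod z \<and> cmod z < 2}"

definition collar :: "'a::topological_space set \<Rightarrow> 'a set \<Rightarrow> bool" where
  "collar \<gamma> A \<longleftrightarrow> open A \<and> A homeomorphic open_annulus \<and> \<gamma> \<in> components (frontier A) \<and>
     (\<exists>U. open U \<and> \<gamma> \<subseteq> U \<and> A \<in> components (U - \<gamma>))"

definition semi_attracting :: "(real \<Rightarrow> 'a::topological_space \<Rightarrow> 'a) \<Rightarrow> 'a set \<Rightarrow> bool" where
  "semi_attracting v \<gamma> \<longleftrightarrow> (\<exists>A. collar \<gamma> A \<and>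
      (\<forall>x\<in>A. omega_limit v x = \<gamma> \<and> pos_orbit v x \<subseteq> A))"

definition semi_repelling :: "(real \<Rightarrow> 'a::topological_space \<Rightarrow> 'a) \<Rightarrow> 'a set \<Rightarrow> bool" where
  "semi_repelling v \<gamma> \<longleftrightarrow> (\<exists>A. collar \<gamma> A \<and>
      (\<forall>x\<in>A. alpha_limit v x = \<gamma> \<and> neg_orbit v x \<subseteq> A))"

definition limit_circuit :: "(real \<Rightarrow> 'a::topological_space \<Rightarrow> 'a) \<Rightarrow> 'a set \<Rightarrow> bool" where
  "limit_circuit v \<gamma> \<longleftrightarrow> nontrivial_circuit v \<gamma> \<and> (semi_attracting v \<gamma> \<or> semi_repelling v \<gamma>)"

text \<open>Open transverse arc (open arc, or half-open arc ending on the boundary of the surface),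
  characterised topologically by a flow box onto an open set.\<close>
definition transverse_arc :: "(real \<Rightarrow> 'a::topological_space \<Rightarrow> 'a) \<Rightarrow> 'a set \<Rightarrow> bool" where
  "transverse_arc v I \<longleftrightarrow> (I homeomorphic {0<..<1::real} \<or> I homeomorphic {0..<1::real}) \<and>
     (\<exists>\<epsilon>>0. \<exists>g. open ((\<lambda>p. v (fst p) (snd p)) ` ({-\<epsilon><..<\<epsilon>} \<times> I)) \<and>
        homeomorphism ({-\<epsilon><..<\<epsilon>} \<times> I) ((\<lambda>p. v (fst p) (snd p)) ` ({-\<epsilon><..<\<epsilon>} \<times> I))
          (\<lambda>p. v (fst p) (snd p)) g)"

definition fr_dom :: "(real \<Rightarrow> 'a \<Rightarrow> 'a) \<Rightarrow> 'a set \<Rightarrow> 'a set" where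
  "fr_dom v I = {y\<in>I. \<exists>t>0. v t y \<in> I}"

definition fr_time :: "(real \<Rightarrow> 'a \<Rightarrow> 'a) \<Rightarrow> 'a set \<Rightarrow> 'a \<Rightarrow> real" where
  "fr_time v I y = (THE t. t > 0 \<and> v t y \<in> I \<and> (\<forall>s. 0 < s \<and> s < t \<longrightarrow> v s y \<notin> I))"

text \<open>First return map on I (meaningful on fr_dom v I).\<close>
definition first_return :: "(real \<Rightarrow> 'a \<Rightarrow> 'a) \<Rightarrow> 'a set \<Rightarrow> 'a \<Rightarrow> 'a" where
  "first_return v I y = v (fr_time v I y) y"

definition fr_orientation_reversing :: "(real \<Rightarrow> 'a::topological_space \<Rightarrow> 'a) \<Rightarrow> 'a set \<Rightarrow> bool" where
  "fr_orientation_reversing v I \<longleftrightarrow> (\<exists>(J::real set) h k. (J = {0<..<1} \<or> J = {0..<1}) \<and> homeomorphism J I h k \<and>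
     (\<forall>a\<in>k ` fr_dom v I. \<exists>\<delta>>0. \<forall>b\<in>k ` fr_dom v I. dist b a < \<delta> \<longrightarrow>
        (b < a \<longrightarrow> k (first_return v I (h a)) < k (first_return v I (h b))) \<and>
        (a < b \<longrightarrow> k (first_return v I (h b)) < k (first_return v I (h a)))))"

definition wandering_holonomy :: "(real \<Rightarrow> 'a::topological_space \<Rightarrow> 'a) \<Rightarrow> 'a set \<Rightarrow> bool" where
  "wandering_holonomy v \<gamma> \<longleftrightarrow> nontrivial_circuit v \<gamma> \<and>
     (\<exists>x\<in>\<gamma>. \<not> singular v x \<and> (\<forall>W. open W \<and> x \<in> W \<longrightarrow>
        (\<exists>I. I \<subseteq> W \<and> x \<in> I \<and> transverse_arc v I \<and> fr_orientation_reversing v I \<and>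
             fr_dom v I \<noteq> {} \<and> fr_dom v I \<inter> first_return v I ` fr_dom v I = {})))"

end

theory Submission
  imports Defs
begin

text \<open>Limit points of orbits are non-wandering and the non-wandering set is closed, which gives
  the first two claims. A limit circuit is the \<open>\<omega>\<close>- or \<open>\<alpha>\<close>-limit set of any point of its collar,
  so it consists of closed orbits; a separatrix tends to a singular point and so is not closed,
  hence a non-periodic limit circuit would be a finite connected set with two points.
  For holonomy at a non-singular point \<open>x\<close>: near a flow box through \<open>x\<close>, a transverse arc cannot
  return to itself in short time, because sliding the arc along flow lines onto the base of the box
  is locally injective, hence injective on the arc. Together with the tube lemma this shows that the
  first return map of small arcs through \<open>x\<close> fixes \<open>x\<close> if \<open>x\<close> is periodic, and has empty domain if
  \<open>x\<close> is wandering.\<close>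

abbreviation flow_map :: "(real \<Rightarrow> 'a \<Rightarrow> 'a) \<Rightarrow> real \<times> 'a \<Rightarrow> 'a" where
  "flow_map v \<equiv> \<lambda>p. v (fst p) (snd p)"

lemma flow_add: "is_flow v \<Longrightarrow> v s (v t x) = v (s + t) x"
  by (simp add: is_flow_def)

lemma flow_zero [simp]: "is_flow v \<Longrightarrow> v 0 x = x"
  by (simp add: is_flow_def)

lemma continuous_on_flow_map: "is_flow v \<Longrightarrow> continuous_on UNIV (flow_map v)"
  by (simp add: is_flow_def)

lemma continuous_on_trajectory:
  assumes "is_flow v" shows "continuous_on UNIV (\<lambda>t. v t x)"
proof -
  have "continuous_on UNIV (flow_map v \<circ> (\<lambda>t. (t, x)))"
    by (intro continuous_on_compose continuous_intros
        continuous_on_subset[OF continuous_on_flow_map[OF assms]]) simp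
  then show ?thesis by (simp add: o_def)
qed

lemma flow_periodic_int:
  assumes "is_flow v" "v T x = x"
  shows "v (of_int n * T) x = x"
proof -
  have nat: "v (of_nat m * c) x = x" if "v c x = x" for m c
    using that by (induction m) (simp_all add: assms(1) algebra_simps flow_add[OF assms(1), symmetric])
  have "v (- T) x = x"
    using flow_add[OF assms(1), of "- T" T x] assms by simp
  then show ?thesis
    using nat[of T "nat n"] nat[of "- T" "nat (- n)"] assms(2) by (cases "n \<ge> 0") simp_all
qed

lemma mem_closure_trajectory:
  "x \<in> U \<Longrightarrow> open U \<Longrightarrow> x \<in> closure ((\<lambda>t. v t z) ` S) \<Longrightarrow> \<exists>t\<in>S. v t z \<in> U"
  by (auto simp: closure_iff_nhds_not_empty)

lemma omega_limit_subset_Omega: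
  assumes "is_flow v" shows "omega_limit v z \<subseteq> Omega v"
proof (intro subsetI, unfold Omega_def, intro CollectI allI impI)
  fix y U T assume "y \<in> omega_limit v z" and U: "open U \<and> y \<in> U"
  then have hit: "\<exists>t\<ge>S. v t z \<in> U" for S
    using mem_closure_trajectory[of y U v z "{S..}"] by (auto simp: omega_limit_def)
  obtain t1 where t1: "t1 \<ge> 0" "v t1 z \<in> U" using hit by blast
  obtain t2 where t2: "t2 \<ge> t1 + \<bar>T\<bar> + 1" "v t2 z \<in> U" using hit by blast
  have "v (t2 - t1) (v t1 z) = v t2 z" by (simp add: flow_add[OF assms])
  then have "v t2 z \<in> v (t2 - t1) ` U \<inter> U" using t1 t2 by (metis IntI image_eqI)
  then show "\<exists>t>T. v t ` U \<inter> U \<noteq> {}" using t2 by (intro exI[of _ "t2 - t1"]) auto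
qed

lemma alpha_limit_subset_Omega:
  assumes "is_flow v" shows "alpha_limit v z \<subseteq> Omega v"
proof (intro subsetI, unfold Omega_def, intro CollectI allI impI)
  fix y U T assume "y \<in> alpha_limit v z" and U: "open U \<and> y \<in> U"
  then have hit: "\<exists>t\<le>S. v t z \<in> U" for S
    using mem_closure_trajectory[of y U v z "{..S}"] by (auto simp: alpha_limit_def)
  obtain t1 where t1: "t1 \<le> 0" "v t1 z \<in> U" using hit by blast
  obtain t2 where t2: "t2 \<le> t1 - \<bar>T\<bar> - 1" "v t2 z \<in> U" using hit by blast
  have "v (t1 - t2) (v t2 z) = v t1 z" by (simp add: flow_add[OF assms])
  then have "v t1 z \<in> v (t1 - t2) ` U \<inter> U" using t1 t2 by (metis IntI image_eqI)
  then show "\<exists>t>T. v t ` U \<inter> U \<noteq> {}" using t2 by (intro exI[of _ "t1 - t2"]) auto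
qed

lemma closed_Omega: "closed (Omega v)"
  unfolding closed_def
proof (subst open_subopen, intro ballI)
  fix x assume "x \<in> - Omega v"
  then obtain U T where U: "open U" "x \<in> U" "\<forall>t>T. v t ` U \<inter> U = {}"
    by (auto simp: Omega_def)
  then have "U \<subseteq> - Omega v" unfolding Omega_def by blast
  then show "\<exists>T. open T \<and> x \<in> T \<and> T \<subseteq> - Omega v" using U by blast
qed

lemma periodic_mem_omega_limit:
  assumes "is_flow v" "v T x = x" "T > 0"
  shows "x \<in> omega_limit v x"
  unfolding omega_limit_def
proof
  fix S :: real
  obtain n :: nat where "S < real n * T" using reals_Archimedean3[OF assms(3)] by blast
  moreover have "v (of_int (int n) * T) x = x" by (rule flow_periodic_int[OF assms(1,2)])
  ultimately have "x \<in> (\<lambda>t. v t x) ` {S..}" by (intro image_eqI[of _ _ "real n * T"]) simp_all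
  then show "x \<in> closure ((\<lambda>t. v t x) ` {S..})" by (rule closure_subset[THEN subsetD])
qed

lemma periodic_mem_alpha_limit:
  assumes "is_flow v" "v T x = x" "T > 0"
  shows "x \<in> alpha_limit v x"
  unfolding alpha_limit_def
proof
  fix S :: real
  obtain n :: nat where "- S < real n * T" using reals_Archimedean3[OF assms(3)] by blast
  moreover have "v (of_int (- int n) * T) x = x" by (rule flow_periodic_int[OF assms(1,2)])
  ultimately have "x \<in> (\<lambda>t. v t x) ` {..S}" by (intro image_eqI[of _ _ "- real n * T"]) simp_all
  then show "x \<in> closure ((\<lambda>t. v t x) ` {..S})" by (rule closure_subset[THEN subsetD])
qed

lemma Cl_eq: "Cl v = {x. \<exists>T>0. v T x = x}"
  by (auto simp: Cl_def singular_def intro: exI[of _ 1])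

lemma Cl_subset_Omega: "is_flow v \<Longrightarrow> Cl v \<subseteq> Omega v"
  using periodic_mem_omega_limit omega_limit_subset_Omega by (fastforce simp: Cl_eq)

lemma recurrent_mem_Omega: "is_flow v \<Longrightarrow> recurrent v x \<Longrightarrow> x \<in> Omega v"
  using omega_limit_subset_Omega alpha_limit_subset_Omega by (fastforce simp: recurrent_def)

lemma separatrix_not_mem_Cl:
  assumes "is_flow v" "separatrix v x" shows "x \<notin> Cl v"
proof
  assume "x \<in> Cl v"
  then obtain T where "T > 0" "v T x = x" by (auto simp: Cl_eq)
  then have "x \<in> omega_limit v x" "x \<in> alpha_limit v x"
    using periodic_mem_omega_limit periodic_mem_alpha_limit assms(1) by blast+
  moreover obtain p where "singular v p" "omega_limit v x = {p} \<or> alpha_limit v x = {p}"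
    "\<not> singular v x" using assms(2) by (auto simp: separatrix_def)
  ultimately show False by auto
qed

lemma collar_nonempty: "collar \<gamma> A \<Longrightarrow> A \<noteq> {}"
proof
  assume "collar \<gamma> A" "A = {}"
  then have "{} homeomorphic open_annulus" by (simp add: collar_def)
  moreover have "3/2 \<in> open_annulus" by (simp add: open_annulus_def)
  ultimately show False by auto
qed

lemma limit_circuit_subset_Omega:
  assumes "is_flow v" "limit_circuit v \<gamma>" shows "\<gamma> \<subseteq> Omega v"
proof -
  obtain A where A: "collar \<gamma> A"
    and "(\<forall>x\<in>A. omega_limit v x = \<gamma>) \<or> (\<forall>x\<in>A. alpha_limit v x = \<gamma>)"
    using assms(2) unfolding limit_circuit_def semi_attracting_def semi_repelling_def by blast
  moreover obtain z where "z \<in> A" using collar_nonempty[OF A] by blast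
  ultimately have "\<gamma> = omega_limit v z \<or> \<gamma> = alpha_limit v z" by metis
  then show ?thesis using omega_limit_subset_Omega alpha_limit_subset_Omega assms(1) by metis
qed

lemma finite_connected_imp_subsingleton:
  fixes S :: "'a::t1_space set"
  assumes "finite S" "connected S" "a \<in> S" "b \<in> S"
  shows "a = b"
proof (rule ccontr)
  assume "a \<noteq> b"
  then have "S \<subseteq> {a} \<union> (S - {a})" "{a} \<inter> (S - {a}) \<inter> S = {}"
    "{a} \<inter> S \<noteq> {}" "(S - {a}) \<inter> S \<noteq> {}"
    using assms(3,4) by blast+
  moreover have "closed {a}" "closed (S - {a})" using assms(1) by (auto intro: finite_imp_closed)
  ultimately show False using assms(2) unfolding connected_closed by blast
qed

lemma nontrivial_circuit_of_closed_orbits_is_periodic: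
  fixes v :: "real \<Rightarrow> 'a::t1_space \<Rightarrow> 'a"
  assumes "is_flow v" "nontrivial_circuit v \<gamma>" "\<gamma> \<subseteq> Cl v"
  shows "periodic_orbit v \<gamma>"
proof (rule ccontr)
  assume "\<not> periodic_orbit v \<gamma>"
  then have "(\<exists>f. oriented_loop v f \<and> \<gamma> = f ` {0..1}) \<and> (\<nexists>p. \<gamma> = {p}) \<and>
      (\<exists>F E. finite F \<and> (\<forall>p\<in>F. singular v p) \<and> (\<forall>x\<in>E. separatrix v x) \<and>
         \<gamma> = F \<union> (\<Union>x\<in>E. orbit v x))"
    using assms(2) unfolding nontrivial_circuit_def by argo
  then obtain f F E where f: "oriented_loop v f" "\<gamma> = f ` {0..1}" and ns: "\<nexists>p. \<gamma> = {p}"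
    and F: "finite F" and E: "\<forall>x\<in>E. separatrix v x" and \<gamma>: "\<gamma> = F \<union> (\<Union>x\<in>E. orbit v x)"
    by (elim conjE exE) (rule that)
  have "E = {}"
  proof
    show "E \<subseteq> {}"
    proof
      fix x assume "x \<in> E"
      moreover have "x \<in> orbit v x" unfolding orbit_def using assms(1) by (metis flow_zero rangeI)
      ultimately have "x \<in> \<gamma>" unfolding \<gamma> by blast
      then have "x \<in> Cl v" using assms(3) by blast
      then show "x \<in> {}" using separatrix_not_mem_Cl[OF assms(1)] E \<open>x \<in> E\<close> by blast
    qed
  qed simp
  then have "finite \<gamma>" using F \<gamma> by simp
  moreover have "connected \<gamma>"
    using f connected_continuous_image[OF continuous_on_subset connected_Icc, of UNIV f 0 1]
    unfolding oriented_loop_def by auto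
  moreover have "f 0 \<in> \<gamma>" using f(2) by simp
  moreover obtain b where "b \<in> \<gamma>" "b \<noteq> f 0" using ns \<open>f 0 \<in> \<gamma>\<close> by blast
  ultimately show False using finite_connected_imp_subsingleton by blast
qed

lemma interior_extremum_of_equal_ends:
  fixes F :: "real \<Rightarrow> real"
  assumes "a < b" "F a = F b" "continuous_on {a..b} F"
  obtains c where "a < c" "c < b" "(\<forall>y\<in>{a..b}. F y \<le> F c) \<or> (\<forall>y\<in>{a..b}. F c \<le> F y)"
proof -
  obtain c1 where c1: "c1 \<in> {a..b}" "\<forall>y\<in>{a..b}. F y \<le> F c1"
    using continuous_attains_sup[OF compact_Icc _ assms(3)] assms(1) by auto
  obtain c2 where c2: "c2 \<in> {a..b}" "\<forall>y\<in>{a..b}. F c2 \<le> F y"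
    using continuous_attains_inf[OF compact_Icc _ assms(3)] assms(1) by auto
  consider "a < c1 \<and> c1 < b" | "a < c2 \<and> c2 < b" | "c1 \<in> {a, b}" "c2 \<in> {a, b}"
    using c1(1) c2(1) by fastforce
  then show ?thesis
  proof cases
    case 3
    \<comment> \<open>then \<open>F\<close> is constant\<close>
    then have "F c1 = F a" "F c2 = F a" using assms(2) by auto
    then show ?thesis
      using that[of "(a + b) / 2"] assms(1) c1(2) c2(2) by fastforce
  qed (use that c1 c2 in blast)+
qed

lemma inj_on_if_locally_inj_on_interval:
  fixes F :: "real \<Rightarrow> real"
  assumes J: "is_interval J" and cont: "continuous_on J F"
    and loc: "\<And>a. a \<in> J \<Longrightarrow> \<exists>d>0. inj_on F (ball a d \<inter> J)"
  shows "inj_on F J"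
proof -
  have False if ab: "a < b" "a \<in> J" "b \<in> J" "F a = F b" for a b
  proof -
    have sub: "{a..b} \<subseteq> J" using J ab(2,3) by (meson atLeastAtMost_iff mem_is_interval_1_I subsetI)
    obtain c where c: "a < c" "c < b" and ext: "(\<forall>y\<in>{a..b}. F y \<le> F c) \<or> (\<forall>y\<in>{a..b}. F c \<le> F y)"
      using interior_extremum_of_equal_ends[OF ab(1,4) continuous_on_subset[OF cont sub]] .
    have "c \<in> J" using c sub by auto
    then obtain d where d: "d > 0" "inj_on F (ball c d \<inter> J)" using loc by blast
    define \<eta> where "\<eta> = min d (min (c - a) (b - c)) / 2"
    have "\<eta> > 0" "\<eta> < d" "\<eta> < c - a" "\<eta> < b - c" using d c by (auto simp: \<eta>_def)
    then have \<eta>: "\<eta> > 0" "{c - \<eta>..c + \<eta>} \<subseteq> {a..b}" "{c - \<eta>..c + \<eta>} \<subseteq> ball c d \<inter> J"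
      using sub by (auto simp: dist_real_def)
    have "continuous_on {c - \<eta>..c + \<eta>} F" "inj_on F {c - \<eta>..c + \<eta>}"
      using \<eta>(2,3) sub continuous_on_subset[OF cont] inj_on_subset[OF d(2)] by blast+
    then have "(F (c - \<eta>) < F c \<and> F c < F (c + \<eta>)) \<or> (F (c + \<eta>) < F c \<and> F c < F (c - \<eta>))"
      using continuous_inj_imp_mono[of "c - \<eta>" c "c + \<eta>" F] \<eta>(1) by simp
    moreover have "c - \<eta> \<in> {a..b}" "c + \<eta> \<in> {a..b}" using \<eta>(1,2) by auto
    ultimately show False using ext by fastforce
  qed
  then show ?thesis by (metis inj_onI linorder_cases)
qed

lemma inj_on_if_locally_inj_on_arc:
  fixes F :: "'a::topological_space \<Rightarrow> real" and J :: "real set"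
  assumes "S homeomorphic J" "is_interval J" "continuous_on S F"
    and loc: "\<And>x. x \<in> S \<Longrightarrow> \<exists>U. openin (top_of_set S) U \<and> x \<in> U \<and> inj_on F U"
  shows "inj_on F S"
proof -
  obtain h k where "homeomorphism J S h k"
    using assms(1) homeomorphic_sym unfolding homeomorphic_def by blast
  then have h: "continuous_on J h" "h ` J = S" "inj_on h J"
    unfolding homeomorphism_def by (auto intro: inj_on_inverseI)
  have "inj_on (F \<circ> h) J"
  proof (rule inj_on_if_locally_inj_on_interval[OF assms(2)])
    show "continuous_on J (F \<circ> h)"
      using h continuous_on_compose assms(3) by blast
  next
    fix a assume a: "a \<in> J"
    then obtain U where U: "openin (top_of_set S) U" "h a \<in> U" "inj_on F U" using loc h(2) by blast
    have "openin (top_of_set J) (J \<inter> h -` U)"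
      using continuous_openin_preimage[OF h(1) _ U(1)] h(2) by blast
    then obtain d where "d > 0" "ball a d \<inter> J \<subseteq> J \<inter> h -` U"
      using a U(2) unfolding openin_contains_ball by blast
    moreover have "inj_on (F \<circ> h) (J \<inter> h -` U)"
      using U(3) h(3) by (auto simp: inj_on_def)
    ultimately show "\<exists>d>0. inj_on (F \<circ> h) (ball a d \<inter> J)" using inj_on_subset by blast
  qed
  then show ?thesis using comp_inj_on_iff[OF h(3), of F] h(2) by blast
qed

lemma transverse_arc_homeomorphic_interval:
  assumes "transverse_arc v I" obtains J :: "real set" where "is_interval J" "I homeomorphic J"
proof -
  have "is_interval {0<..<1::real}" "is_interval {0..<1::real}"
    by (simp_all add: is_interval_convex_1 convex_real_interval)
  then show ?thesis using assms[unfolded transverse_arc_def, THEN conjunct1] that by blast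
qed

lemma transverse_arc_flow_box_inj:
  assumes "transverse_arc v I" obtains \<epsilon> where "\<epsilon> > 0" "inj_on (flow_map v) ({-\<epsilon><..<\<epsilon>} \<times> I)"
proof -
  obtain \<epsilon> g where "\<epsilon> > 0"
    and h: "homeomorphism ({-\<epsilon><..<\<epsilon>} \<times> I) (flow_map v ` ({-\<epsilon><..<\<epsilon>} \<times> I)) (flow_map v) g"
    using assms[unfolded transverse_arc_def, THEN conjunct2] by blast
  moreover have "inj_on (flow_map v) ({-\<epsilon><..<\<epsilon>} \<times> I)"
    using homeomorphism_apply1[OF h] by (rule inj_on_inverseI)
  ultimately show ?thesis using that by blast
qed

lemma flow_box_projection_inj_on_arc:
  fixes v :: "real \<Rightarrow> 'a::topological_space \<Rightarrow> 'a"
  assumes fl: "is_flow v" and "transverse_arc v I0"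
    and box: "homeomorphism (T \<times> I0) (flow_map v ` (T \<times> I0)) (flow_map v) g"
    and I: "transverse_arc v I" "I \<subseteq> flow_map v ` (T \<times> I0)"
  shows "inj_on (\<lambda>q. snd (g q)) I"
proof -
  let ?B = "flow_map v ` (T \<times> I0)"
  have g: "continuous_on ?B g" "\<And>q. q \<in> ?B \<Longrightarrow> g q \<in> T \<times> I0"
    "\<And>q. q \<in> ?B \<Longrightarrow> v (fst (g q)) (snd (g q)) = q"
    using homeomorphism_cont2[OF box] homeomorphism_image2[OF box] homeomorphism_apply2[OF box]
    by auto
  obtain c0 :: "'a \<Rightarrow> real" where c0: "continuous_on I0 c0" "inj_on c0 I0"
  proof -
    obtain J0 :: "real set" and c0 k where h: "homeomorphism I0 J0 c0 k"
      using transverse_arc_homeomorphic_interval[OF \<open>transverse_arc v I0\<close>]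
      unfolding homeomorphic_def by blast
    have "inj_on c0 I0" using homeomorphism_apply1[OF h] by (rule inj_on_inverseI)
    then show ?thesis using that homeomorphism_cont1[OF h] by blast
  qed
  obtain \<epsilon> where \<epsilon>: "\<epsilon> > 0" "inj_on (flow_map v) ({-\<epsilon><..<\<epsilon>} \<times> I)"
    using transverse_arc_flow_box_inj[OF I(1)] .
  obtain J :: "real set" where J: "is_interval J" "I homeomorphic J"
    using transverse_arc_homeomorphic_interval[OF I(1)] .
  have gI: "continuous_on I g" using continuous_on_subset[OF g(1) I(2)] .
  have sI: "snd (g q) \<in> I0" if "q \<in> I" for q using g(2) I(2) that by force
  \<comment> \<open>two such points lie on one flow line at times less than \<open>\<epsilon>\<close> apart, so the flow box of \<open>I\<close> identifies them\<close>
  have same_plaque: "q1 = q2"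
    if q: "q1 \<in> I" "q2 \<in> I" "\<bar>fst (g q1) - fst (g q2)\<bar> < \<epsilon>" "snd (g q1) = snd (g q2)" for q1 q2
  proof -
    have "v (fst (g q1)) (snd (g q1)) = q1" "v (fst (g q2)) (snd (g q2)) = q2"
      using g(3) q(1,2) I(2) by blast+
    then have "v (fst (g q2) - fst (g q1)) q1 = v 0 q2"
      using flow_add[OF fl, of "fst (g q2) - fst (g q1)" "fst (g q1)" "snd (g q1)"] q(4) fl by simp
    then have "flow_map v (fst (g q2) - fst (g q1), q1) = flow_map v (0, q2)" by simp
    moreover have "(fst (g q2) - fst (g q1), q1) \<in> {-\<epsilon><..<\<epsilon>} \<times> I" "(0, q2) \<in> {-\<epsilon><..<\<epsilon>} \<times> I"
      using q \<epsilon>(1) by auto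
    ultimately show ?thesis using inj_onD[OF \<epsilon>(2)] by blast
  qed
  have "inj_on (\<lambda>q. c0 (snd (g q))) I"
  proof (rule inj_on_if_locally_inj_on_arc[OF J(2,1)])
    show "continuous_on I (\<lambda>q. c0 (snd (g q)))"
      using continuous_on_compose2[OF c0(1) continuous_on_snd[OF gI]] sI by blast
  next
    fix q assume q: "q \<in> I"
    let ?U = "I \<inter> (\<lambda>q'. fst (g q')) -` ball (fst (g q)) (\<epsilon> / 2)"
    have "openin (top_of_set I) ?U"
      using continuous_openin_preimage_gen[OF continuous_on_fst[OF gI] open_ball] .
    moreover have "inj_on (\<lambda>q. c0 (snd (g q))) ?U"
    proof (rule inj_onI)
      fix q1 q2 assume q: "q1 \<in> ?U" "q2 \<in> ?U" "c0 (snd (g q1)) = c0 (snd (g q2))"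
      then have "snd (g q1) = snd (g q2)" using sI inj_onD[OF c0(2)] by blast
      moreover have "dist (fst (g q1)) (fst (g q2)) < \<epsilon>"
        using q(1,2) dist_triangle_half_l[of "fst (g q1)" "fst (g q)" \<epsilon> "fst (g q2)"]
        by (simp add: dist_commute)
      ultimately show "q1 = q2" using same_plaque q(1,2) by (simp add: dist_real_def)
    qed
    ultimately show "\<exists>U. openin (top_of_set I) U \<and> q \<in> U \<and> inj_on (\<lambda>q. c0 (snd (g q))) U"
      using q \<epsilon>(1) by auto
  qed
  then show ?thesis by (simp add: inj_on_def)
qed

lemma flow_box_no_short_return:
  fixes v :: "real \<Rightarrow> 'a::topological_space \<Rightarrow> 'a"
  assumes fl: "is_flow v" and "transverse_arc v I0"
    and box: "homeomorphism ({-2*\<delta><..<2*\<delta>} \<times> I0) (flow_map v ` ({-2*\<delta><..<2*\<delta>} \<times> I0)) (flow_map v) g"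
    and I: "transverse_arc v I" "I \<subseteq> flow_map v ` ({-\<delta><..<\<delta>} \<times> I0)"
    and y: "y \<in> I" "v t y \<in> I" and t: "0 < t" "t < \<delta>"
  shows False
proof -
  obtain s z where sz: "s \<in> {-\<delta><..<\<delta>}" "z \<in> I0" "y = v s z" using I(2) y(1) by auto
  then have D: "(s, z) \<in> {-2*\<delta><..<2*\<delta>} \<times> I0" "(t + s, z) \<in> {-2*\<delta><..<2*\<delta>} \<times> I0"
    using t by auto
  have gy: "g y = (s, z)" using homeomorphism_apply1[OF box D(1)] sz(3) by simp
  have gty: "g (v t y) = (t + s, z)"
    using homeomorphism_apply1[OF box D(2)] sz(3) flow_add[OF fl] by simp
  have "I \<subseteq> flow_map v ` ({-2*\<delta><..<2*\<delta>} \<times> I0)" using I(2) by fastforce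
  then have "inj_on (\<lambda>q. snd (g q)) I"
    using flow_box_projection_inj_on_arc[OF fl \<open>transverse_arc v I0\<close> box I(1)] by blast
  then have "y = v t y" using gy gty y by (metis inj_onD snd_conv)
  then show False using gy gty t by simp
qed

lemma no_short_return_nbhd:
  fixes v :: "real \<Rightarrow> 'a::topological_space \<Rightarrow> 'a"
  assumes fl: "is_flow v" and I0: "transverse_arc v I0"
  obtains W \<delta> where "open W" "I0 \<subseteq> W" "\<delta> > 0"
    "\<And>I y t. transverse_arc v I \<Longrightarrow> I \<subseteq> W \<Longrightarrow> y \<in> I \<Longrightarrow> v t y \<in> I \<Longrightarrow> 0 < t \<Longrightarrow> t < \<delta> \<Longrightarrow> False"
proof -
  obtain e g where e: "e > 0" and open_box: "open (flow_map v ` ({-e<..<e} \<times> I0))"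
    and box: "homeomorphism ({-e<..<e} \<times> I0) (flow_map v ` ({-e<..<e} \<times> I0)) (flow_map v) g"
    using I0[unfolded transverse_arc_def, THEN conjunct2] by blast
  define \<delta> where "\<delta> = e / 2"
  have box': "homeomorphism ({-2*\<delta><..<2*\<delta>} \<times> I0) (flow_map v ` ({-2*\<delta><..<2*\<delta>} \<times> I0)) (flow_map v) g"
    using box by (simp add: \<delta>_def)
  define W where "W = flow_map v ` ({-\<delta><..<\<delta>} \<times> I0)"
  have "{-\<delta><..<\<delta>} \<times> I0 = ({-e<..<e} \<times> I0) \<inter> ({-\<delta><..<\<delta>} \<times> UNIV)"
    using e by (auto simp: \<delta>_def)
  then have "openin (top_of_set ({-e<..<e} \<times> I0)) ({-\<delta><..<\<delta>} \<times> I0)"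
    by (metis open_Times open_UNIV open_greaterThanLessThan openin_open_Int)
  then have "open W"
    using openin_open_trans[OF homeomorphism_imp_open_map[OF box] open_box] by (simp add: W_def)
  moreover have "I0 \<subseteq> W"
  proof
    fix x assume "x \<in> I0"
    then have "(0, x) \<in> {-\<delta><..<\<delta>} \<times> I0" using e by (simp add: \<delta>_def)
    moreover have "x = flow_map v (0, x)" using fl by simp
    ultimately show "x \<in> W" unfolding W_def by (rule rev_image_eqI)
  qed
  moreover have "\<delta> > 0" using e by (simp add: \<delta>_def)
  ultimately show ?thesis
  proof (rule that)
    fix I y t assume "transverse_arc v I" "I \<subseteq> W" "y \<in> I" "v t y \<in> I" "0 < t" "t < \<delta>"
    from this[unfolded W_def] show False by (rule flow_box_no_short_return[OF fl I0 box'])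
  qed
qed

lemma no_return_nbhd:
  fixes v :: "real \<Rightarrow> 'a::t2_space \<Rightarrow> 'a"
  assumes fl: "is_flow v" and "compact K" and nf: "\<And>t. t \<in> K \<Longrightarrow> v t x \<noteq> x"
  obtains W where "open W" "x \<in> W" "\<And>t y. t \<in> K \<Longrightarrow> y \<in> W \<Longrightarrow> v t y \<notin> W"
proof -
  define N where "N = {p :: ('a \<times> 'a) \<times> real. v (snd p) (fst (fst p)) \<noteq> snd (fst p)}"
  have "continuous_on UNIV (\<lambda>p :: ('a \<times> 'a) \<times> real. v (snd p) (fst (fst p)))"
    using continuous_on_compose2[OF continuous_on_flow_map[OF fl], of UNIV "\<lambda>p. (snd p, fst (fst p))"]
    by (simp add: continuous_intros)
  then have "open N" unfolding N_def by (intro open_Collect_neq continuous_intros)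
  moreover have "{(x, x)} \<times> K \<subseteq> N" using nf by (auto simp: N_def)
  ultimately obtain X0 where "(x, x) \<in> X0" "open X0" "X0 \<times> K \<subseteq> N"
    using Elementary_Topology.tube_lemma[OF \<open>compact K\<close>] by metis
  then obtain A B where AB: "open A" "open B" "(x, x) \<in> A \<times> B" "A \<times> B \<subseteq> X0"
    by (metis open_prod_elim)
  show ?thesis
  proof (rule that[of "A \<inter> B"])
    fix t y assume "t \<in> K" "y \<in> A \<inter> B"
    then have "((y, z), t) \<in> N" if "z \<in> A \<inter> B" for z
      using that AB(4) \<open>X0 \<times> K \<subseteq> N\<close> by blast
    then show "v t y \<notin> A \<inter> B" by (auto simp: N_def)
  qed (use AB in auto)
qed

lemma least_period:
  fixes v :: "real \<Rightarrow> 'a::t2_space \<Rightarrow> 'a"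
  assumes fl: "is_flow v" and T: "T > 0" "v T x = x" and "\<delta> > 0"
    and short: "\<And>t. 0 < t \<Longrightarrow> t < \<delta> \<Longrightarrow> v t x \<noteq> x"
  obtains P where "P > 0" "v P x = x" "\<And>s. 0 < s \<Longrightarrow> s < P \<Longrightarrow> v s x \<noteq> x"
proof -
  define S where "S = {t. v t x = x} \<inter> {\<delta>..}"
  have "closed S" unfolding S_def
    using closed_Collect_eq[OF continuous_on_trajectory[OF fl] continuous_on_const] by blast
  moreover have "T \<in> S" using short T by (force simp: S_def)
  moreover have "bdd_below S" unfolding S_def by (rule bdd_belowI[of _ \<delta>]) simp
  ultimately have P: "Inf S \<in> S" "\<And>s. s \<in> S \<Longrightarrow> Inf S \<le> s"
    using closed_contains_Inf cInf_lower by blast+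
  show ?thesis
  proof (rule that[of "Inf S"])
    show "Inf S > 0" "v (Inf S) x = x" using P(1) \<open>\<delta> > 0\<close> by (auto simp: S_def)
  next
    fix s assume "0 < s" "s < Inf S"
    then show "v s x \<noteq> x" using short P(2)[of s] by (force simp: S_def)
  qed
qed

lemma first_return_eqI:
  assumes "y \<in> I" "t > 0" "v t y \<in> I" and first: "\<And>s. 0 < s \<Longrightarrow> s < t \<Longrightarrow> v s y \<notin> I"
  shows "y \<in> fr_dom v I" "first_return v I y = v t y"
proof -
  show "y \<in> fr_dom v I" using assms(1-3) by (auto simp: fr_dom_def)
  have "fr_time v I y = t"
    unfolding fr_time_def
  proof (rule the_equality)
    fix t' assume t': "t' > 0 \<and> v t' y \<in> I \<and> (\<forall>s. 0 < s \<and> s < t' \<longrightarrow> v s y \<notin> I)"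
    then show "t' = t" using first assms(2,3) by (metis linorder_neqE_linordered_idom)
  qed (use assms in auto)
  then show "first_return v I y = v t y" by (simp add: first_return_def)
qed


lemma closed_orbit_first_return_fixed:
  fixes v :: "real \<Rightarrow> 'a::t2_space \<Rightarrow> 'a"
  assumes fl: "is_flow v" and I0: "transverse_arc v I0" "x \<in> I0" and "x \<in> Cl v"
  obtains W where "open W" "x \<in> W"
    "\<And>I. transverse_arc v I \<Longrightarrow> I \<subseteq> W \<Longrightarrow> x \<in> I \<Longrightarrow> x \<in> fr_dom v I \<and> first_return v I x = x"
proof -
  obtain W0 \<delta> where W0: "open W0" "I0 \<subseteq> W0" "\<delta> > 0"
    and short: "\<And>I y t. transverse_arc v I \<Longrightarrow> I \<subseteq> W0 \<Longrightarrow> y \<in> I \<Longrightarrow> v t y \<in> I \<Longrightarrow>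
      0 < t \<Longrightarrow> t < \<delta> \<Longrightarrow> False"
    using no_short_return_nbhd[OF fl I0(1)] by blast
  obtain T where "T > 0" "v T x = x" using \<open>x \<in> Cl v\<close> by (auto simp: Cl_eq)
  moreover have "v t x \<noteq> x" if "0 < t" "t < \<delta>" for t
    using short[OF I0(1) W0(2) I0(2) _ that] I0(2) by auto
  ultimately obtain P where P: "P > 0" "v P x = x" and min: "\<And>s. 0 < s \<Longrightarrow> s < P \<Longrightarrow> v s x \<noteq> x"
    using least_period[OF fl _ _ W0(3)] by blast
  have "v t x \<noteq> x" if "t \<in> {\<delta>..P - \<delta>}" for t using min that W0(3) by auto
  then obtain W1 where W1: "open W1" "x \<in> W1" "\<And>t y. t \<in> {\<delta>..P - \<delta>} \<Longrightarrow> y \<in> W1 \<Longrightarrow> v t y \<notin> W1"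
    using no_return_nbhd[OF fl compact_Icc] by metis
  show ?thesis
  proof (rule that[of "W0 \<inter> W1"])
    fix I assume I: "transverse_arc v I" "I \<subseteq> W0 \<inter> W1" "x \<in> I"
    have "v s x \<notin> I" if s: "0 < s" "s < P" for s
    proof
      assume sI: "v s x \<in> I"
      consider "s < \<delta>" | "s \<in> {\<delta>..P - \<delta>}" | "P - \<delta> < s"
        unfolding atLeastAtMost_iff by linarith
      then show False
      proof cases
        case 1 then show False using short[of I x s] I sI s by blast
      next
        case 2 then show False using W1 I sI by blast
      next
        case 3
        \<comment> \<open>then the orbit closes up again within time less than \<open>\<delta>\<close>\<close>
        have "v (P - s) (v s x) = x" using flow_add[OF fl] P(2) by simp
        then show False using short[of I "v s x" "P - s"] I sI s 3 by simp
      qed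
    qed
    then show "x \<in> fr_dom v I \<and> first_return v I x = x"
      using first_return_eqI[OF I(3) P(1)] P(2) I(3) by simp
  qed (use W0 W1 I0 in auto)
qed

lemma wandering_point_arcs_never_return:
  fixes v :: "real \<Rightarrow> 'a::t2_space \<Rightarrow> 'a"
  assumes fl: "is_flow v" and I0: "transverse_arc v I0" "x \<in> I0" and "x \<notin> Omega v"
  obtains W where "open W" "x \<in> W" "\<And>I. transverse_arc v I \<Longrightarrow> I \<subseteq> W \<Longrightarrow> fr_dom v I = {}"
proof -
  obtain U T0 where U: "open U" "x \<in> U" "\<And>t. t > T0 \<Longrightarrow> v t ` U \<inter> U = {}"
    using \<open>x \<notin> Omega v\<close> unfolding Omega_def by auto
  obtain W0 \<delta> where W0: "open W0" "I0 \<subseteq> W0" "\<delta> > 0"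
    and short: "\<And>I y t. transverse_arc v I \<Longrightarrow> I \<subseteq> W0 \<Longrightarrow> y \<in> I \<Longrightarrow> v t y \<in> I \<Longrightarrow>
      0 < t \<Longrightarrow> t < \<delta> \<Longrightarrow> False"
    using no_short_return_nbhd[OF fl I0(1)] by blast
  have "x \<notin> Cl v" using \<open>x \<notin> Omega v\<close> Cl_subset_Omega[OF fl] by blast
  then have "v t x \<noteq> x" if "t \<in> {\<delta>..T0}" for t using that W0(3) by (auto simp: Cl_eq)
  then obtain W1 where W1: "open W1" "x \<in> W1" "\<And>t y. t \<in> {\<delta>..T0} \<Longrightarrow> y \<in> W1 \<Longrightarrow> v t y \<notin> W1"
    using no_return_nbhd[OF fl compact_Icc] by metis
  show ?thesis
  proof (rule that[of "U \<inter> W0 \<inter> W1"])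
    fix I assume I: "transverse_arc v I" "I \<subseteq> U \<inter> W0 \<inter> W1"
    have False if "y \<in> I" "t > 0" "v t y \<in> I" for y t
    proof -
      consider "t < \<delta>" | "t \<in> {\<delta>..T0}" | "T0 < t" unfolding atLeastAtMost_iff by linarith
      then show False
      proof cases
        case 1 then show False using short[of I y t] I that by blast
      next
        case 2 then show False using W1(3)[of t y] I that by blast
      next
        case 3 then show False using U(3)[of t] I that by blast
      qed
    qed
    then show "fr_dom v I = {}" by (auto simp: fr_dom_def)
  qed (use U W0 W1 I0 in auto)
qed

lemma no_wandering_holonomy:
  fixes v :: "real \<Rightarrow> 'a::t2_space \<Rightarrow> 'a"
  assumes fl: "is_flow v" and "Cl v = Omega v"
  shows "\<not> wandering_holonomy v \<gamma>"
proof
  assume "wandering_holonomy v \<gamma>"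
  then obtain x where "\<forall>W. open W \<and> x \<in> W \<longrightarrow> (\<exists>I. I \<subseteq> W \<and> x \<in> I \<and> transverse_arc v I \<and>
      fr_orientation_reversing v I \<and> fr_dom v I \<noteq> {} \<and> fr_dom v I \<inter> first_return v I ` fr_dom v I = {})"
    unfolding wandering_holonomy_def by (elim conjE bexE) (rule that)
  then have arcs: "\<And>W. open W \<Longrightarrow> x \<in> W \<Longrightarrow> \<exists>I. I \<subseteq> W \<and> x \<in> I \<and> transverse_arc v I \<and>
      fr_dom v I \<noteq> {} \<and> fr_dom v I \<inter> first_return v I ` fr_dom v I = {}"
    by meson
  obtain I0 where I0: "transverse_arc v I0" "x \<in> I0" using arcs[OF open_UNIV UNIV_I] by meson
  show False
  proof (cases "x \<in> Cl v")
    case True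
    obtain W where "open W" "x \<in> W"
      and fixed: "\<And>I. transverse_arc v I \<Longrightarrow> I \<subseteq> W \<Longrightarrow> x \<in> I \<Longrightarrow> x \<in> fr_dom v I \<and> first_return v I x = x"
      by (rule closed_orbit_first_return_fixed[OF fl I0 True]) (rule that)
    then obtain I where "I \<subseteq> W" "x \<in> I" "transverse_arc v I"
      and "fr_dom v I \<inter> first_return v I ` fr_dom v I = {}" using arcs by meson
    then show False using fixed by (metis IntI empty_iff rev_image_eqI)
  next
    case False
    then have "x \<notin> Omega v" using \<open>Cl v = Omega v\<close> by simp
    obtain W where "open W" "x \<in> W" and "\<And>I. transverse_arc v I \<Longrightarrow> I \<subseteq> W \<Longrightarrow> fr_dom v I = {}"
      by (rule wandering_point_arcs_never_return[OF fl I0 \<open>x \<notin> Omega v\<close>]) (rule that)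
    then show False using arcs by meson
  qed
qed

theorem mainTheorem9:
  fixes v :: "real \<Rightarrow> 'a::t2_space \<Rightarrow> 'a"
  assumes "is_surface (UNIV :: 'a set)"
    and "compact (UNIV :: 'a set)"
    and "is_flow v"
    and "Cl v = Omega v"
  shows "closed (Cl v) \<and> (\<forall>x. recurrent v x \<longrightarrow> x \<in> Cl v) \<and>
         (\<forall>\<gamma>. limit_circuit v \<gamma> \<longrightarrow> periodic_orbit v \<gamma>) \<and>
         (\<forall>\<gamma>. \<not> wandering_holonomy v \<gamma>)"
proof (intro conjI allI impI)
  show "closed (Cl v)" using closed_Omega assms(4) by simp
  show "x \<in> Cl v" if "recurrent v x" for x
    using recurrent_mem_Omega[OF assms(3) that] assms(4) by simp
  show "periodic_orbit v \<gamma>" if "limit_circuit v \<gamma>" for \<gamma>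
    using nontrivial_circuit_of_closed_orbits_is_periodic[OF assms(3)] that
      limit_circuit_subset_Omega[OF assms(3) that] assms(4) by (simp add: limit_circuit_def)
  show "\<not> wandering_holonomy v \<gamma>" for \<gamma> using no_wandering_holonomy[OF assms(3,4)] .
qed

end
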